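(* Let $a>0$ and let $P_+^a(x_i)$ denote the smallest $x>x_i$ at which the solution of $y'=-ay-\sin(3\pi x/2)$ with $y(x_i)=0$ vanishes. Then $P_+^a(\tfrac{10}{3})\in(4,\tfrac{14}{3})$ for all $a>0$. Moreover, for every $\delta_1>0$ (small) there exists $a_1>0$ (large) such that $P_+^a(\tfrac{10}{3})\in(4,4+\delta_1)$ for all $a\in(a_1,+\infty)$. *)

theory Defs
  imports Complex_Main
begin

definition ode_sol :: "real \<Rightarrow> real \<Rightarrow> (real \<Rightarrow> real)" where
  "ode_sol a xi = (THE y. y xi = 0 \<and>
      (\<forall>x. (y has_real_derivative (- a * y x - sin (3 * pi * x / 2))) (at x)))"

definition P_plus :: "real \<Rightarrow> real \<Rightarrow> real" where
  "P_plus a xi = Inf {x. x > xi \<and> ode_sol a xi x = 0}"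

end

theory Submission
  imports Defs "HOL-Analysis.Elementary_Metric_Spaces"
begin

text \<open>With \<open>\<omega> = 3\<pi>/2\<close>, the solution starting at \<open>10/3\<close> is explicit:
  \<open>y x = (\<omega> cos (\<omega> x) - a sin (\<omega> x) + \<omega> exp (-a (x - 10/3))) / (a\<^sup>2 + \<omega>\<^sup>2)\<close>.
  On \<open>(10/3, 4)\<close> the forcing \<open>-sin (\<omega> x)\<close> is positive, so \<open>exp (a (x - 10/3)) y x\<close> increases
  from \<open>0\<close> and \<open>y > 0\<close> on \<open>(10/3, 4]\<close>. At \<open>14/3\<close> the numerator is \<open>\<omega> (exp (-4a/3) - 1) < 0\<close>,
  and at \<open>4 + \<epsilon>\<close> the term \<open>-a sin (\<omega> \<epsilon>)\<close> dominates once \<open>a > 3\<pi> / sin (\<omega> \<epsilon>)\<close>. By the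
  intermediate value theorem the first zero after \<open>10/3\<close> lies strictly between \<open>4\<close> and such a point.\<close>

lemma first_zero_between:
  fixes g :: "real \<Rightarrow> real"
  assumes cont: "continuous_on UNIV g"
    and pos: "\<And>x. \<xi> < x \<Longrightarrow> x \<le> c \<Longrightarrow> g x > 0"
    and "\<xi> < c" "c < b" "g b < 0"
  shows "Inf {x. \<xi> < x \<and> g x = 0} \<in> {c<..<b}"
proof -
  define Z where "Z = {x. \<xi> < x \<and> g x = 0}"
  have Z_above: "c < x" if "x \<in> Z" for x
    using pos[of x] that by (force simp: Z_def)
  obtain z where z: "c \<le> z" "z \<le> b" "g z = 0"
    using IVT2[of g b 0 c] pos[of c] assms cont by (force simp: continuous_on_eq_continuous_at)
  then have "z \<in> Z"
    using pos[of c] \<open>\<xi> < c\<close> by (cases "z = c") (auto simp: Z_def)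
  have bdd: "bdd_below Z"
    using Z_above by (auto simp: bdd_below_def intro: less_imp_le)
  have "Inf Z \<in> {x. g x = 0}"
    using closed_Collect_eq[OF cont continuous_on_const] \<open>z \<in> Z\<close> bdd
    by (intro closed_subset_contains_Inf) (auto simp: Z_def)
  moreover have "c \<le> Inf Z"
    using \<open>z \<in> Z\<close> Z_above by (intro cInf_greatest) (auto intro: less_imp_le)
  moreover have "Inf Z \<le> b"
    using \<open>z \<in> Z\<close> bdd z(2) by (meson cInf_lower order_trans)
  ultimately show ?thesis
    using pos[of c] \<open>\<xi> < c\<close> \<open>g b < 0\<close> by (auto simp: Z_def order_le_less)
qed

lemma linear_ode_unique:
  fixes y z f :: "real \<Rightarrow> real"
  assumes y: "\<And>x. (y has_real_derivative (- a * y x - f x)) (at x)"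
    and z: "\<And>x. (z has_real_derivative (- a * z x - f x)) (at x)"
    and "y \<xi> = z \<xi>"
  shows "y = z"
proof
  fix x
  let ?d = "\<lambda>x. exp (a * x) * (y x - z x)"
  have "(?d has_real_derivative 0) (at t)" for t
  proof -
    have "(?d has_real_derivative
        exp (a * t) * a * (y t - z t) + exp (a * t) * ((- a * y t - f t) - (- a * z t - f t))) (at t)"
      using y z by (intro derivative_eq_intros refl) auto
    then show ?thesis by (simp add: algebra_simps)
  qed
  then have "?d x = ?d \<xi>" by (intro DERIV_isconst_all) blast
  then show "y x = z x" using \<open>y \<xi> = z \<xi>\<close> by simp
qed

lemma linear_ode_pos_after_zero:
  fixes y f :: "real \<Rightarrow> real"
  assumes y: "\<And>x. (y has_real_derivative (- a * y x - f x)) (at x)"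
    and "y \<xi> = 0"
    and f_neg: "\<And>x. \<xi> < x \<Longrightarrow> x < c \<Longrightarrow> f x < 0"
    and "\<xi> < x" "x \<le> c"
  shows "y x > 0"
proof -
  let ?H = "\<lambda>t. exp (a * (t - \<xi>)) * y t"
  have H: "(?H has_real_derivative - exp (a * (t - \<xi>)) * f t) (at t)" for t
  proof -
    have "(?H has_real_derivative exp (a * (t - \<xi>)) * a * y t + exp (a * (t - \<xi>)) * (- a * y t - f t)) (at t)"
      using y by (intro derivative_eq_intros refl) auto
    then show ?thesis by (simp add: algebra_simps)
  qed
  have "?H \<xi> < ?H x"
  proof (rule DERIV_pos_imp_increasing_open[OF \<open>\<xi> < x\<close>])
    fix t assume "\<xi> < t" "t < x"
    then show "\<exists>d. (?H has_real_derivative d) (at t) \<and> 0 < d"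
      using H f_neg[of t] \<open>x \<le> c\<close> by (intro exI conjI) (auto simp: mult_pos_neg)
  next
    show "continuous_on {\<xi>..x} ?H"
      using H by (intro continuous_at_imp_continuous_on ballI DERIV_isCont) blast
  qed
  then show ?thesis using \<open>y \<xi> = 0\<close> by (simp add: zero_less_mult_iff)
qed

definition forced_sol :: "real \<Rightarrow> real \<Rightarrow> real \<Rightarrow> real \<Rightarrow> real" where
  "forced_sol \<omega> a \<xi> x =
     (\<omega> * cos (\<omega> * x) - a * sin (\<omega> * x)
       - (\<omega> * cos (\<omega> * \<xi>) - a * sin (\<omega> * \<xi>)) * exp (- a * (x - \<xi>))) / (a\<^sup>2 + \<omega>\<^sup>2)"

lemma forced_sol_start: "forced_sol \<omega> a \<xi> \<xi> = 0"
  by (simp add: forced_sol_def)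

lemma forced_sol_has_derivative:
  assumes "\<omega> \<noteq> 0"
  shows "(forced_sol \<omega> a \<xi> has_real_derivative (- a * forced_sol \<omega> a \<xi> x - sin (\<omega> * x))) (at x)"
proof -
  define N where "N x = \<omega> * cos (\<omega> * x) - a * sin (\<omega> * x)
       - (\<omega> * cos (\<omega> * \<xi>) - a * sin (\<omega> * \<xi>)) * exp (- a * (x - \<xi>))" for x
  have "a\<^sup>2 + \<omega>\<^sup>2 \<noteq> 0"
    using assms by (simp add: add_nonneg_eq_0_iff)
  have "(N has_real_derivative - a * N x - (a\<^sup>2 + \<omega>\<^sup>2) * sin (\<omega> * x)) (at x)"
    unfolding N_def[abs_def]
    by (auto intro!: derivative_eq_intros simp: algebra_simps power2_eq_square)
  then have "((\<lambda>x. N x / (a\<^sup>2 + \<omega>\<^sup>2)) has_real_derivative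
      (- a * N x - (a\<^sup>2 + \<omega>\<^sup>2) * sin (\<omega> * x)) / (a\<^sup>2 + \<omega>\<^sup>2)) (at x)"
    by (rule DERIV_cdivide)
  moreover have "forced_sol \<omega> a \<xi> = (\<lambda>x. N x / (a\<^sup>2 + \<omega>\<^sup>2))"
    by (simp add: fun_eq_iff forced_sol_def N_def)
  moreover have "(- a * N x - (a\<^sup>2 + \<omega>\<^sup>2) * sin (\<omega> * x)) / (a\<^sup>2 + \<omega>\<^sup>2)
      = - a * (N x / (a\<^sup>2 + \<omega>\<^sup>2)) - sin (\<omega> * x)"
    using \<open>a\<^sup>2 + \<omega>\<^sup>2 \<noteq> 0\<close> by (simp add: field_simps)
  ultimately show ?thesis
    by simp
qed

lemma ode_sol_eq_forced_sol: "ode_sol a \<xi> = forced_sol (3 * pi / 2) a \<xi>"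
  unfolding ode_sol_def
proof (rule the_equality)
  have deriv: "(forced_sol (3 * pi / 2) a \<xi> has_real_derivative
      - a * forced_sol (3 * pi / 2) a \<xi> x - sin (3 * pi * x / 2)) (at x)" for x
    using forced_sol_has_derivative[of "3 * pi / 2" a \<xi> x] by simp
  then show "forced_sol (3 * pi / 2) a \<xi> \<xi> = 0 \<and>
      (\<forall>x. (forced_sol (3 * pi / 2) a \<xi> has_real_derivative
        - a * forced_sol (3 * pi / 2) a \<xi> x - sin (3 * pi * x / 2)) (at x))"
    by (simp add: forced_sol_start)
  fix y assume "y \<xi> = 0 \<and> (\<forall>x. (y has_real_derivative - a * y x - sin (3 * pi * x / 2)) (at x))"
  then show "y = forced_sol (3 * pi / 2) a \<xi>"
    using deriv by (intro linear_ode_unique[where \<xi> = \<xi>]) (auto simp: forced_sol_start)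
qed

lemma ode_sol_start: "ode_sol a \<xi> \<xi> = 0"
  by (simp add: ode_sol_eq_forced_sol forced_sol_start)

lemma ode_sol_10_3_neg_iff:
  "ode_sol a (10/3) x < 0 \<longleftrightarrow>
     3 * pi / 2 * cos (3 * pi / 2 * x) - a * sin (3 * pi / 2 * x) + 3 * pi / 2 * exp (- a * (x - 10/3)) < 0"
proof -
  have "a\<^sup>2 + (3 * pi / 2)\<^sup>2 > 0"
    by (simp add: add_nonneg_pos)
  then show ?thesis
    by (simp add: ode_sol_eq_forced_sol forced_sol_def divide_less_0_iff)
qed

lemma ode_sol_has_derivative:
  "(ode_sol a \<xi> has_real_derivative (- a * ode_sol a \<xi> x - sin (3 * pi * x / 2))) (at x)"
  using forced_sol_has_derivative[of "3 * pi / 2" a \<xi> x] by (simp add: ode_sol_eq_forced_sol)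

lemma sin_3pi_half_neg:
  assumes "10/3 < x" "x < 4"
  shows "sin (3 * pi * x / 2) < 0"
proof -
  have "sin (3 * pi * x / 2) = sin (3 * pi * x / 2 - 4 * pi)"
    by (simp add: sin_diff)
  also have "\<dots> < 0"
    using assms by (intro sin_lt_zero) (auto simp: field_simps)
  finally show ?thesis .
qed

lemma P_plus_10_3_between:
  assumes "4 < b" "ode_sol a (10/3) b < 0"
  shows "P_plus a (10/3) \<in> {4<..<b}"
  unfolding P_plus_def
proof (rule first_zero_between)
  show "continuous_on UNIV (ode_sol a (10/3))"
    using ode_sol_has_derivative by (intro continuous_at_imp_continuous_on ballI DERIV_isCont) blast
  show "ode_sol a (10/3) x > 0" if "10/3 < x" "x \<le> 4" for x
    using that by (intro linear_ode_pos_after_zero[OF ode_sol_has_derivative ode_sol_start])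
      (auto simp: sin_3pi_half_neg)
qed (use assms in auto)

lemma ode_sol_10_3_at_14_3_neg:
  assumes "a > 0"
  shows "ode_sol a (10/3) (14/3) < 0"
  using assms by (simp add: ode_sol_10_3_neg_iff)

lemma ode_sol_10_3_neg_near_4_for_large_a:
  assumes "0 < e" "e < 2/3"
  shows "\<exists>a1>0. \<forall>a>a1. ode_sol a (10/3) (4 + e) < 0"
proof (intro exI conjI allI impI)
  have "sin (3 * pi / 2 * e) > 0"
    using assms by (intro sin_gt_zero) auto
  then show a1_pos: "3 * pi / sin (3 * pi / 2 * e) > 0"
    by simp
  fix a assume "a > 3 * pi / sin (3 * pi / 2 * e)"
  then have "a > 0"
    using a1_pos by linarith
  have forcing: "a * sin (3 * pi / 2 * e) > 3 * pi"
    using \<open>a > 3 * pi / sin (3 * pi / 2 * e)\<close> \<open>sin (3 * pi / 2 * e) > 0\<close>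
    by (simp add: pos_divide_less_eq)
  have "3 * pi / 2 * cos (3 * pi / 2 * e) \<le> 3 * pi / 2"
    by simp
  moreover have "3 * pi / 2 * exp (- a * (4 + e - 10/3)) \<le> 3 * pi / 2"
    using \<open>a > 0\<close> assms(1) by simp
  ultimately have "3 * pi / 2 * cos (3 * pi / 2 * e) - a * sin (3 * pi / 2 * e)
      + 3 * pi / 2 * exp (- a * (4 + e - 10/3)) < 0"
    using forcing by linarith
  then show "ode_sol a (10/3) (4 + e) < 0"
    by (simp add: ode_sol_10_3_neg_iff distrib_left sin_add cos_add)
qed

theorem lemma4:
  shows "(\<forall>a::real. a > 0 \<longrightarrow> P_plus a (10/3) \<in> {4<..<14/3}) \<and>
         (\<forall>\<delta>1::real. \<delta>1 > 0 \<longrightarrow>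
            (\<exists>a1::real. a1 > 0 \<and> (\<forall>a. a > a1 \<longrightarrow> P_plus a (10/3) \<in> {4<..<4 + \<delta>1})))"
proof (intro conjI allI impI)
  fix a :: real assume "a > 0"
  then show "P_plus a (10/3) \<in> {4<..<14/3}"
    by (intro P_plus_10_3_between ode_sol_10_3_at_14_3_neg) auto
next
  fix \<delta> :: real assume "\<delta> > 0"
  define e where "e = min (\<delta>/2) (1/2)"
  have e: "0 < e" "e < 2/3" "e < \<delta>"
    using \<open>\<delta> > 0\<close> by (auto simp: e_def)
  then obtain a1 where "a1 > 0" and neg: "\<forall>a>a1. ode_sol a (10/3) (4 + e) < 0"
    using ode_sol_10_3_neg_near_4_for_large_a by blast
  have "P_plus a (10/3) \<in> {4<..<4 + \<delta>}" if "a > a1" for a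
    using P_plus_10_3_between[of "4 + e" a] neg that e by auto
  with \<open>a1 > 0\<close> show "\<exists>a1>0. \<forall>a>a1. P_plus a (10/3) \<in> {4<..<4 + \<delta>}"
    by blast
qed

end
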